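(* Let $t$ be a term with $\mathrm{ofv}(t)=\emptyset$. The following are equivalent: (1) $t$ is $\to_w$-normal; (2) $t$ is $\to_y$-normal; (3) $t$ is a strict answer, i.e. generated by $a_s ::= v\mid a_s[x\backslash a_s']$ with $x\in\mathrm{fv}(a_s)$.
   Context: Terms: $t ::= x \mid \lambda x.t \mid t\,u \mid t[x\backslash u]$ ($t[x\backslash u]$ an explicit substitution binding $x$ in $t$; terms up to $\alpha$). Values $v ::= \lambda x.t$. Shallow free variables: $\mathrm{ofv}(x)=\{x\}$, $\mathrm{ofv}(\lambda x.t)=\emptyset$, $\mathrm{ofv}(tu)=\mathrm{ofv}(t)\cup\mathrm{ofv}(u)$, $\mathrm{ofv}(t[x\backslash u])=(\mathrm{ofv}(t)\setminus\{x\})\cup\mathrm{ofv}(u)$. Substitution contexts $S ::= \langle\cdot\rangle\mid S[x\backslash u]$. Weak contexts $W ::= \langle\cdot\rangle \mid W\,t \mid t\,W \mid t[x\backslash W] \mid W[x\backslash u]$; for a class of contexts, $K\langle\langle t\rangle\rangle$ is plugging without capture of free variables of $t$. Root rules: $S\langle\lambda x.t\rangle u\mapsto_m S\langle t[x\backslash u]\rangle$; for a class of contexts $K$, $K\langle\langle x\rangle\rangle[x\backslash u]\mapsto_{e_K} K\langle\langle u\rangle\rangle[x\backslash u]$; $t[x\backslash S\langle v\rangle]\mapsto_{gcv} S\langle t\rangle$ if $x\notin\mathrm{fv}(t)$. $\to_w$ is the union of the closures under weak contexts of $\mapsto_m$, $\mapsto_{e_W}$ (with $K$ = weak contexts) and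 $\mapsto_{gcv}$. Call-by-silly strategy: answers $a ::= v\mid a[x\backslash a']$; name contexts $N ::= \langle\cdot\rangle\mid N t\mid N[x\backslash t]$; auxiliary contexts $A ::= \langle\cdot\rangle\mid a[x\backslash A]\mid A[x\backslash t]$; silly contexts $Y ::= A\langle N\rangle$. $\to_{ym} := Y\langle\mapsto_m\rangle$; $\to_{yeAY} := A\langle\mapsto_{e_Y}\rangle$; $\to_{yeYN} := Y\langle\mapsto_{e_N}\rangle$; $\to_{ygcv}:=Y\langle\mapsto_{gcv}\rangle$ (closures of the root rules under the indicated contexts); $\to_y$ is their union. *)

theory Defs
  imports Main
begin

section \<open>Terms with explicit substitutions (de Bruijn indices, so terms are up to alpha)\<close>

text \<open>ES t u represents t[x\u]: the binder x is index 0 in t; u lies outside the binder.\<close>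
datatype trm = Var nat | Lam trm | App trm trm | ES trm trm

text \<open>free variables (as de Bruijn indices relative to the top level)\<close>
fun fv :: "trm \<Rightarrow> nat set" where
  "fv (Var n) = {n}"
| "fv (Lam t) = {n. Suc n \<in> fv t}"
| "fv (App t u) = fv t \<union> fv u"
| "fv (ES t u) = {n. Suc n \<in> fv t} \<union> fv u"

fun ofv :: "trm \<Rightarrow> nat set" where
  "ofv (Var n) = {n}"
| "ofv (Lam t) = {}"
| "ofv (App t u) = ofv t \<union> ofv u"
| "ofv (ES t u) = {n. Suc n \<in> ofv t} \<union> ofv u"

fun lift :: "nat \<Rightarrow> nat \<Rightarrow> trm \<Rightarrow> trm" where
  "lift k c (Var n) = Var (if n < c then n else n + k)"
| "lift k c (Lam t) = Lam (lift k (Suc c) t)"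
| "lift k c (App t u) = App (lift k c t) (lift k c u)"
| "lift k c (ES t u) = ES (lift k (Suc c) t) (lift k c u)"

text \<open>down c t: remove (unused) index c, decrementing the free indices above it\<close>
fun down :: "nat \<Rightarrow> trm \<Rightarrow> trm" where
  "down c (Var n) = Var (if n < c then n else n - 1)"
| "down c (Lam t) = Lam (down (Suc c) t)"
| "down c (App t u) = App (down c t) (down c u)"
| "down c (ES t u) = ES (down (Suc c) t) (down c u)"

definition is_value :: "trm \<Rightarrow> bool" where
  "is_value t \<longleftrightarrow> (\<exists>b. t = Lam b)"

datatype ctx = Hole | CAppL ctx trm | CAppR trm ctx | CLam ctx | CESL ctx trm | CESR trm ctx

text \<open>plain plugging (may capture)\<close>
fun plug :: "ctx \<Rightarrow> trm \<Rightarrow> trm" where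
  "plug Hole s = s"
| "plug (CAppL C u) s = App (plug C s) u"
| "plug (CAppR t C) s = App t (plug C s)"
| "plug (CLam C) s = Lam (plug C s)"
| "plug (CESL C u) s = ES (plug C s) u"
| "plug (CESR t C) s = ES t (plug C s)"

fun depth :: "ctx \<Rightarrow> nat" where
  "depth Hole = 0"
| "depth (CAppL C u) = depth C"
| "depth (CAppR t C) = depth C"
| "depth (CLam C) = Suc (depth C)"
| "depth (CESL C u) = Suc (depth C)"
| "depth (CESR t C) = depth C"

text \<open>plugging without capture: K<<s>> where s's free variables refer to the outside of K\<close>
definition plug_nc :: "ctx \<Rightarrow> trm \<Rightarrow> trm" where
  "plug_nc C s = plug C (lift (depth C) 0 s)"

fun comp :: "ctx \<Rightarrow> ctx \<Rightarrow> ctx" where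
  "comp Hole D = D"
| "comp (CAppL C u) D = CAppL (comp C D) u"
| "comp (CAppR t C) D = CAppR t (comp C D)"
| "comp (CLam C) D = CLam (comp C D)"
| "comp (CESL C u) D = CESL (comp C D) u"
| "comp (CESR t C) D = CESR t (comp C D)"

inductive sctx :: "ctx \<Rightarrow> bool" where
  "sctx Hole"
| "sctx S \<Longrightarrow> sctx (CESL S u)"

inductive wctx :: "ctx \<Rightarrow> bool" where
  "wctx Hole"
| "wctx W \<Longrightarrow> wctx (CAppL W t)"
| "wctx W \<Longrightarrow> wctx (CAppR t W)"
| "wctx W \<Longrightarrow> wctx (CESR t W)"
| "wctx W \<Longrightarrow> wctx (CESL W u)"

inductive root_m :: "trm \<Rightarrow> trm \<Rightarrow> bool" where
  "sctx S \<Longrightarrow> root_m (App (plug S (Lam t)) u) (plug S (ES t (lift (depth S) 0 u)))"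

text \<open>K<<x>>[x\u] \<mapsto> K<<u>>[x\u], K ranging over the class of contexts P\<close>
inductive root_e :: "(ctx \<Rightarrow> bool) \<Rightarrow> trm \<Rightarrow> trm \<Rightarrow> bool" for P where
  "P K \<Longrightarrow> root_e P (ES (plug_nc K (Var 0)) u) (ES (plug_nc K (lift 1 0 u)) u)"

text \<open>t[x\S<v>] \<mapsto> S<t> if x not free in t\<close>
inductive root_gcv :: "trm \<Rightarrow> trm \<Rightarrow> bool" where
  "sctx S \<Longrightarrow> is_value v \<Longrightarrow> 0 \<notin> fv t \<Longrightarrow>
     root_gcv (ES t (plug S v)) (plug_nc S (down 0 t))"

definition ctx_closure :: "(ctx \<Rightarrow> bool) \<Rightarrow> (trm \<Rightarrow> trm \<Rightarrow> bool) \<Rightarrow> trm \<Rightarrow> trm \<Rightarrow> bool" where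
  "ctx_closure P R s s' \<longleftrightarrow> (\<exists>C l r. P C \<and> R l r \<and> s = plug C l \<and> s' = plug C r)"

definition step_w :: "trm \<Rightarrow> trm \<Rightarrow> bool" where
  "step_w s s' \<longleftrightarrow> ctx_closure wctx root_m s s' \<or> ctx_closure wctx (root_e wctx) s s'
                   \<or> ctx_closure wctx root_gcv s s'"

inductive answer :: "trm \<Rightarrow> bool" where
  "answer (Lam t)"
| "answer a \<Longrightarrow> answer a' \<Longrightarrow> answer (ES a a')"

inductive strict_answer :: "trm \<Rightarrow> bool" where
  "strict_answer (Lam t)"
| "strict_answer a \<Longrightarrow> strict_answer a' \<Longrightarrow> 0 \<in> fv a \<Longrightarrow> strict_answer (ES a a')"

inductive nctx :: "ctx \<Rightarrow> bool" where
  "nctx Hole"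
| "nctx N \<Longrightarrow> nctx (CAppL N t)"
| "nctx N \<Longrightarrow> nctx (CESL N t)"

inductive actx :: "ctx \<Rightarrow> bool" where
  "actx Hole"
| "answer a \<Longrightarrow> actx A \<Longrightarrow> actx (CESR a A)"
| "actx A \<Longrightarrow> actx (CESL A t)"

definition yctx :: "ctx \<Rightarrow> bool" where
  "yctx Y \<longleftrightarrow> (\<exists>A N. actx A \<and> nctx N \<and> Y = comp A N)"

definition step_y :: "trm \<Rightarrow> trm \<Rightarrow> bool" where
  "step_y s s' \<longleftrightarrow> ctx_closure yctx root_m s s'
                  \<or> ctx_closure actx (root_e yctx) s s'
                  \<or> ctx_closure yctx (root_e nctx) s s'
                  \<or> ctx_closure yctx root_gcv s s'"

definition normal :: "(trm \<Rightarrow> trm \<Rightarrow> bool) \<Rightarrow> trm \<Rightarrow> bool" where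
  "normal R t \<longleftrightarrow> \<not> (\<exists>t'. R t t')"

end

theory Submission
  imports Defs
begin

(* A strict answer has no weak redex: every subterm in weak position is again a strict answer,
   so no application, variable occurrence or garbage-collectable substitution is reachable.
   Since every silly context is weak, step_y is contained in step_w, so w-normal terms are
   y-normal. Conversely, by induction on a y-normal term t: either t is a strict answer, or the
   silly strategy is blocked on a variable occurrence in silly position that is not bound by any
   enclosing substitution (otherwise an e-step would fire). Such a variable is a shallow free
   variable of t, which the hypothesis ofv t = {} rules out. *)

lemma plug_comp [simp]: "plug (comp C D) s = plug C (plug D s)"
  by (induction C) auto

lemma comp_assoc: "comp (comp C D) E = comp C (comp D E)"
  by (induction C) auto

lemma plug_nc_Var0: "plug_nc K (Var 0) = plug K (Var (depth K))"
  by (simp add: plug_nc_def)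

lemma ctx_closure_mono:
  "ctx_closure P R s s' \<Longrightarrow> (\<And>C. P C \<Longrightarrow> Q C) \<Longrightarrow> (\<And>l r. R l r \<Longrightarrow> R' l r) \<Longrightarrow>
   ctx_closure Q R' s s'"
  unfolding ctx_closure_def by blast

lemma ctx_closure_plug:
  "ctx_closure P R s s' \<Longrightarrow> (\<And>C. P C \<Longrightarrow> P (comp D C)) \<Longrightarrow>
   ctx_closure P R (plug D s) (plug D s')"
  unfolding ctx_closure_def by (metis plug_comp)

lemma ctx_closure_root: "P Hole \<Longrightarrow> R l r \<Longrightarrow> ctx_closure P R l r"
  unfolding ctx_closure_def by (metis plug.simps(1))

lemma root_e_mono: "root_e P l r \<Longrightarrow> (\<And>C. P C \<Longrightarrow> Q C) \<Longrightarrow> root_e Q l r"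
  by (induction rule: root_e.induct) (blast intro: root_e.intros)

lemma wctx_comp: "wctx C \<Longrightarrow> wctx D \<Longrightarrow> wctx (comp C D)"
  by (induction rule: wctx.induct) (auto intro: wctx.intros)

lemma actx_comp: "actx C \<Longrightarrow> actx D \<Longrightarrow> actx (comp C D)"
  by (induction rule: actx.induct) (auto intro: actx.intros)

lemma nctx_comp: "nctx C \<Longrightarrow> nctx D \<Longrightarrow> nctx (comp C D)"
  by (induction rule: nctx.induct) (auto intro: nctx.intros)

lemma actx_imp_wctx: "actx A \<Longrightarrow> wctx A"
  by (induction rule: actx.induct) (auto intro: wctx.intros)

lemma nctx_imp_wctx: "nctx N \<Longrightarrow> wctx N"
  by (induction rule: nctx.induct) (auto intro: wctx.intros)

lemma yctx_imp_wctx: "yctx Y \<Longrightarrow> wctx Y"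
  unfolding yctx_def using wctx_comp actx_imp_wctx nctx_imp_wctx by blast

lemma nctx_imp_yctx: "nctx N \<Longrightarrow> yctx N"
  unfolding yctx_def by (metis actx.intros(1) comp.simps(1))

lemma yctx_comp_actx: "actx A \<Longrightarrow> yctx Y \<Longrightarrow> yctx (comp A Y)"
  unfolding yctx_def by (metis actx_comp comp_assoc)

lemma yctx_CESL: "yctx Y \<Longrightarrow> yctx (CESL Y u)"
  using yctx_comp_actx[OF actx.intros(3)[OF actx.intros(1)]] by simp

lemma yctx_CESR: "answer a \<Longrightarrow> yctx Y \<Longrightarrow> yctx (CESR a Y)"
  using yctx_comp_actx[OF actx.intros(2)[OF _ actx.intros(1)]] by simp

lemma step_y_imp_step_w: "step_y s s' \<Longrightarrow> step_w s s'"
  unfolding step_y_def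
proof (elim disjE)
  assume "ctx_closure yctx root_m s s'"
  then have "ctx_closure wctx root_m s s'"
    by (rule ctx_closure_mono) (auto intro: yctx_imp_wctx)
  then show ?thesis unfolding step_w_def by blast
next
  assume "ctx_closure actx (root_e yctx) s s'"
  then have "ctx_closure wctx (root_e wctx) s s'"
    by (rule ctx_closure_mono) (auto elim: root_e_mono intro: actx_imp_wctx yctx_imp_wctx)
  then show ?thesis unfolding step_w_def by blast
next
  assume "ctx_closure yctx (root_e nctx) s s'"
  then have "ctx_closure wctx (root_e wctx) s s'"
    by (rule ctx_closure_mono) (auto elim: root_e_mono intro: nctx_imp_wctx yctx_imp_wctx)
  then show ?thesis unfolding step_w_def by blast
next
  assume "ctx_closure yctx root_gcv s s'"
  then have "ctx_closure wctx root_gcv s s'"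
    by (rule ctx_closure_mono) (auto intro: yctx_imp_wctx)
  then show ?thesis unfolding step_w_def by blast
qed

lemma step_y_plug_actx: "actx A \<Longrightarrow> step_y s s' \<Longrightarrow> step_y (plug A s) (plug A s')"
  unfolding step_y_def
  using ctx_closure_plug[of yctx _ s s' A] ctx_closure_plug[of actx _ s s' A]
    yctx_comp_actx actx_comp by blast

lemma normal_step_y_plug_actx: "actx A \<Longrightarrow> normal step_y (plug A s) \<Longrightarrow> normal step_y s"
  unfolding normal_def using step_y_plug_actx by blast

lemma step_y_e_yctx: "yctx Y \<Longrightarrow> \<exists>t'. step_y (ES (plug Y (Var (depth Y))) u) t'"
  unfolding step_y_def
  by (metis actx.intros(1) ctx_closure_root plug_nc_Var0 root_e.intros)

lemma strict_answer_sctx_Lam: "strict_answer u \<Longrightarrow> \<exists>S b. sctx S \<and> u = plug S (Lam b)"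
  by (induction rule: strict_answer.induct)
    (metis plug.simps(1) sctx.intros(1), metis plug.simps(5) sctx.intros(2))

lemma step_y_gcv:
  assumes "strict_answer u" "0 \<notin> fv t"
  shows "\<exists>t'. step_y (ES t u) t'"
proof -
  from strict_answer_sctx_Lam[OF \<open>strict_answer u\<close>] obtain S b where "sctx S" "u = plug S (Lam b)"
    by blast
  then have "root_gcv (ES t u) (plug_nc S (down 0 t))"
    using \<open>0 \<notin> fv t\<close> by (simp add: root_gcv.intros is_value_def)
  then show ?thesis
    unfolding step_y_def by (metis ctx_closure_root nctx.intros(1) nctx_imp_yctx)
qed

inductive_cases strict_answer_AppE: "strict_answer (App a b)"
inductive_cases strict_answer_VarE: "strict_answer (Var n)"
inductive_cases strict_answer_ESE: "strict_answer (ES a b)"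

lemma strict_answer_plug_wctxD: "wctx W \<Longrightarrow> strict_answer (plug W s) \<Longrightarrow> strict_answer s"
  by (induction W rule: wctx.induct) (auto elim: strict_answer_AppE strict_answer_ESE)

lemma strict_answer_imp_answer: "strict_answer s \<Longrightarrow> answer s"
  by (induction rule: strict_answer.induct) (auto intro: answer.intros)

lemma strict_answer_normal_step_w:
  assumes "strict_answer s"
  shows "normal step_w s"
proof -
  have "\<not> R l r" if "wctx C" "s = plug C l" "R = root_m \<or> R = root_e wctx \<or> R = root_gcv"
    for C R l r
  proof
    assume "R l r"
    from that have "strict_answer l" using assms strict_answer_plug_wctxD by blast
    with \<open>R l r\<close> \<open>R = root_m \<or> R = root_e wctx \<or> R = root_gcv\<close> show False
    proof (elim disjE)
      assume "R = root_e wctx"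
      with \<open>R l r\<close> obtain K u where "wctx K" "l = ES (plug K (Var (depth K))) u"
        by (auto elim: root_e.cases simp: plug_nc_Var0)
      with \<open>strict_answer l\<close> show False
        by (auto elim: strict_answer_ESE strict_answer_VarE dest: strict_answer_plug_wctxD)
    qed (auto elim: root_m.cases root_gcv.cases strict_answer_AppE strict_answer_ESE)
  qed
  then show ?thesis
    unfolding normal_def step_w_def ctx_closure_def by blast
qed

definition step_name :: "trm \<Rightarrow> trm \<Rightarrow> bool" where
  "step_name s s' \<longleftrightarrow> ctx_closure nctx root_m s s' \<or> ctx_closure nctx (root_e nctx) s s'
                      \<or> ctx_closure nctx root_gcv s s'"

lemma step_name_imp_step_y:
  assumes "step_name s s'"
  shows "step_y s s'"
proof -
  have "ctx_closure yctx R s s'" if "ctx_closure nctx R s s'" for R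
    using that by (rule ctx_closure_mono) (auto intro: nctx_imp_yctx)
  with assms show ?thesis
    unfolding step_name_def step_y_def by blast
qed

lemma step_name_plug_nctx: "nctx N \<Longrightarrow> step_name s s' \<Longrightarrow> step_name (plug N s) (plug N s')"
  unfolding step_name_def using ctx_closure_plug[of nctx _ s s' N] nctx_comp by blast

text \<open>The variable at the hole of K is not bound by K: it is the free variable n of the term.\<close>

definition blocked_on_free_var :: "(ctx \<Rightarrow> bool) \<Rightarrow> trm \<Rightarrow> bool" where
  "blocked_on_free_var P t \<longleftrightarrow> (\<exists>K n. P K \<and> t = plug K (Var (depth K + n)))"

lemma blocked_on_free_var_Var: "P Hole \<Longrightarrow> blocked_on_free_var P (Var n)"
  unfolding blocked_on_free_var_def by (metis add_0 depth.simps(1) plug.simps(1))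

lemma blocked_on_free_var_mono:
  "blocked_on_free_var P t \<Longrightarrow> (\<And>C. P C \<Longrightarrow> Q C) \<Longrightarrow> blocked_on_free_var Q t"
  unfolding blocked_on_free_var_def by blast

lemma blocked_on_free_var_ES:
  assumes "blocked_on_free_var P t" "\<And>K. P K \<Longrightarrow> P (CESL K u)"
  shows "(\<exists>K. P K \<and> t = plug K (Var (depth K))) \<or> blocked_on_free_var P (ES t u)"
proof -
  obtain K n where K: "P K" "t = plug K (Var (depth K + n))"
    using assms(1) unfolding blocked_on_free_var_def by blast
  show ?thesis
  proof (cases n)
    case (Suc m)
    then have "ES t u = plug (CESL K u) (Var (depth (CESL K u) + m))" using K by simp
    then show ?thesis using K assms(2) unfolding blocked_on_free_var_def by blast
  qed (use K in auto)
qed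

lemma ofv_plug_wctx: "wctx W \<Longrightarrow> depth W + n \<in> ofv s \<Longrightarrow> n \<in> ofv (plug W s)"
  by (induction W arbitrary: n rule: wctx.induct) auto

lemma blocked_on_free_var_yctx_ESR:
  "answer a \<Longrightarrow> blocked_on_free_var yctx u \<Longrightarrow> blocked_on_free_var yctx (ES a u)"
  unfolding blocked_on_free_var_def by (metis depth.simps(6) plug.simps(6) yctx_CESR)

lemma blocked_on_free_var_yctx_ofv:
  assumes "blocked_on_free_var yctx t"
  shows "ofv t \<noteq> {}"
proof -
  obtain K n where "yctx K" "t = plug K (Var (depth K + n))"
    using assms unfolding blocked_on_free_var_def by blast
  then have "n \<in> ofv t" using ofv_plug_wctx yctx_imp_wctx by simp
  then show ?thesis by blast
qed

lemma step_name_trichotomy: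
  "(\<exists>t'. step_name t t') \<or> blocked_on_free_var nctx t \<or> (\<exists>S b. sctx S \<and> t = plug S (Lam b))"
proof (induction t)
  case (Var n)
  then show ?case by (simp add: blocked_on_free_var_Var nctx.intros(1))
next
  case (Lam b)
  then show ?case by (metis plug.simps(1) sctx.intros(1))
next
  case (App t u)
  have step: "\<exists>t'. step_name (App t u) t'" if "step_name t t'" for t'
    using step_name_plug_nctx[OF nctx.intros(2)[OF nctx.intros(1)] that] by auto
  have blocked: "blocked_on_free_var nctx (App t u)" if "blocked_on_free_var nctx t"
    using that unfolding blocked_on_free_var_def by (metis depth.simps(2) nctx.intros(2) plug.simps(2))
  have beta: "\<exists>t'. step_name (App (plug S (Lam b)) u) t'" if "sctx S" for S b
    using that unfolding step_name_def by (metis ctx_closure_root nctx.intros(1) root_m.intros)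
  from App.IH(1) show ?case using step blocked beta by blast
next
  case (ES t u)
  have step: "\<exists>t'. step_name (ES t u) t'" if "step_name t t'" for t'
    using step_name_plug_nctx[OF nctx.intros(3)[OF nctx.intros(1)] that] by auto
  have subst: "\<exists>t'. step_name (ES (plug N (Var (depth N))) u) t'" if "nctx N" for N
    using that unfolding step_name_def
    by (metis ctx_closure_root nctx.intros(1) plug_nc_Var0 root_e.intros)
  have answer: "\<exists>S' b'. sctx S' \<and> ES (plug S (Lam b)) u = plug S' (Lam b')" if "sctx S" for S b
    using that by (metis plug.simps(5) sctx.intros(2))
  from ES.IH(1) show ?case
    using step subst answer blocked_on_free_var_ES[of nctx t u] nctx.intros(3) by blast
qed

lemma normal_step_y_cases:
  "normal step_y t \<Longrightarrow> blocked_on_free_var yctx t \<or> strict_answer t"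
proof (induction t)
  case (Var n)
  then show ?case by (simp add: blocked_on_free_var_Var nctx.intros(1) nctx_imp_yctx)
next
  case (Lam b)
  then show ?case by (simp add: strict_answer.intros(1))
next
  case (App t u)
  from step_name_trichotomy[of "App t u"] show ?case
  proof (elim disjE)
    assume "\<exists>t'. step_name (App t u) t'"
    with App.prems show ?thesis unfolding normal_def using step_name_imp_step_y by blast
  next
    assume "blocked_on_free_var nctx (App t u)"
    then show ?thesis using blocked_on_free_var_mono nctx_imp_yctx by blast
  next
    assume "\<exists>S b. sctx S \<and> App t u = plug S (Lam b)"
    then show ?thesis by (auto elim: sctx.cases)
  qed
next
  case (ES t u)
  have "normal step_y t"
    using normal_step_y_plug_actx[OF actx.intros(3)[OF actx.intros(1)], of u t] ES.prems by simp
  with ES.IH(1) consider "blocked_on_free_var yctx t" | "strict_answer t" by blast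
  then show ?case
  proof cases
    case 1
    then show ?thesis
      using blocked_on_free_var_ES[OF 1 yctx_CESL] step_y_e_yctx ES.prems
      unfolding normal_def by blast
  next
    case 2
    then have "answer t" by (rule strict_answer_imp_answer)
    then have "normal step_y u"
      using normal_step_y_plug_actx[OF actx.intros(2)[OF _ actx.intros(1)], of t u] ES.prems
      by simp
    with ES.IH(2) consider "blocked_on_free_var yctx u" | "strict_answer u" by blast
    then show ?thesis
    proof cases
      case 1
      then show ?thesis using \<open>answer t\<close> blocked_on_free_var_yctx_ESR by blast
    next
      case 2
      show ?thesis
      proof (cases "0 \<in> fv t")
        case True
        then show ?thesis using \<open>strict_answer t\<close> 2 by (simp add: strict_answer.intros(2))
      next
        case False
        then show ?thesis using 2 step_y_gcv ES.prems unfolding normal_def by blast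
      qed
    qed
  qed
qed

theorem lemma11p3:
  fixes t :: trm
  assumes "ofv t = {}"
  shows "(normal step_w t \<longleftrightarrow> normal step_y t) \<and> (normal step_y t \<longleftrightarrow> strict_answer t)"
proof -
  have "strict_answer t \<Longrightarrow> normal step_w t"
    by (rule strict_answer_normal_step_w)
  moreover have "normal step_w t \<Longrightarrow> normal step_y t"
    unfolding normal_def using step_y_imp_step_w by blast
  moreover have "normal step_y t \<Longrightarrow> strict_answer t"
    using normal_step_y_cases blocked_on_free_var_yctx_ofv assms by blast
  ultimately show ?thesis by blast
qed

end
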